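(* Let $u,v,w,z,q,g,h,r\in\mathbb R$ and let $$F(y)=\begin{pmatrix}0&u&v\\ w&q&g+wy_2\\ z&h+uy_2&r+(v+z)y_2\end{pmatrix},\quad y\in\mathbb R^3,$$ and assume the symmetric part of $F$ is nondegenerate on the region considered. Then the torsion $H_{ijk}$ of $F$ vanishes identically, the Riemann tensor of the metric $G_{ij}$ vanishes identically, and every constant function $\Phi$ satisfies the one-loop vanishing $\beta$-function equations.
   Context: For a matrix-valued function $F_{ij}(y)$ on an open set of $\mathbb R^3$, set $G_{ij}=\tfrac12(F_{ij}+F_{ji})$ (metric, assumed nondegenerate, used to raise and lower indices), $B_{ij}=\tfrac12(F_{ij}-F_{ji})$, and $H_{ijk}=\partial_iB_{jk}+\partial_jB_{ki}+\partial_kB_{ij}$. Let $\nabla$ be the Levi-Civita connection of $G$, $R_{ij}$ its Ricci tensor and $R$ its scalar curvature. The one-loop vanishing $\beta$-function equations for a function $\Phi$ are: $0=R_{ij}-\nabla_i\nabla_j\Phi-\tfrac14H_{imn}H_j{}^{mn}$; $0=\nabla^k\Phi\,H_{kij}+\nabla^kH_{kij}$; $0=R-2\nabla_k\nabla^k\Phi-\nabla_k\Phi\nabla^k\Phi-\tfrac1{12}H_{kmn}H^{kmn}$. *)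

theory Defs
  imports "HOL-Analysis.Analysis"
begin

text \<open>Coordinates y = (y1,y2,y3) are written y $ 1, y $ 2, y $ 3 (index type 3).
  A matrix-valued field is F :: real^3 \<Rightarrow> real^3^3 with F y $ i $ j = F_ij(y).\<close>

type_synonym field3 = "real^3 \<Rightarrow> real^3^3"

definition pd :: "3 \<Rightarrow> (real^3 \<Rightarrow> real) \<Rightarrow> real^3 \<Rightarrow> real" where
  "pd i f y = deriv (\<lambda>t. f (y + t *\<^sub>R axis i 1)) 0"

definition Gm :: "field3 \<Rightarrow> real^3 \<Rightarrow> real^3^3" where
  "Gm F y = (\<chi> i j. (F y $ i $ j + F y $ j $ i) / 2)"

definition Bm :: "field3 \<Rightarrow> real^3 \<Rightarrow> real^3^3" where
  "Bm F y = (\<chi> i j. (F y $ i $ j - F y $ j $ i) / 2)"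

definition Hs :: "field3 \<Rightarrow> 3 \<Rightarrow> 3 \<Rightarrow> 3 \<Rightarrow> real^3 \<Rightarrow> real" where
  "Hs F i j k y = pd i (\<lambda>x. Bm F x $ j $ k) y + pd j (\<lambda>x. Bm F x $ k $ i) y
                 + pd k (\<lambda>x. Bm F x $ i $ j) y"

definition Ginv :: "field3 \<Rightarrow> real^3 \<Rightarrow> real^3^3" where
  "Ginv F y = matrix_inv (Gm F y)"

definition Chr :: "field3 \<Rightarrow> 3 \<Rightarrow> 3 \<Rightarrow> 3 \<Rightarrow> real^3 \<Rightarrow> real" where
  "Chr F l i j y = (\<Sum>m\<in>UNIV. Ginv F y $ l $ m *
      (pd i (\<lambda>x. Gm F x $ m $ j) y + pd j (\<lambda>x. Gm F x $ m $ i) y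
       - pd m (\<lambda>x. Gm F x $ i $ j) y)) / 2"

definition Riem :: "field3 \<Rightarrow> 3 \<Rightarrow> 3 \<Rightarrow> 3 \<Rightarrow> 3 \<Rightarrow> real^3 \<Rightarrow> real" where
  "Riem F l i j k y = pd j (Chr F l i k) y - pd k (Chr F l i j) y
     + (\<Sum>m\<in>UNIV. Chr F l j m y * Chr F m i k y - Chr F l k m y * Chr F m i j y)"

definition Ric :: "field3 \<Rightarrow> 3 \<Rightarrow> 3 \<Rightarrow> real^3 \<Rightarrow> real" where
  "Ric F i j y = (\<Sum>l\<in>UNIV. Riem F l i l j y)"

definition Scal :: "field3 \<Rightarrow> real^3 \<Rightarrow> real" where
  "Scal F y = (\<Sum>i\<in>UNIV. \<Sum>j\<in>UNIV. Ginv F y $ i $ j * Ric F i j y)"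

definition Hess :: "field3 \<Rightarrow> (real^3 \<Rightarrow> real) \<Rightarrow> 3 \<Rightarrow> 3 \<Rightarrow> real^3 \<Rightarrow> real" where
  "Hess F \<Phi> i j y = pd i (pd j \<Phi>) y - (\<Sum>k\<in>UNIV. Chr F k i j y * pd k \<Phi> y)"

definition gradU :: "field3 \<Rightarrow> (real^3 \<Rightarrow> real) \<Rightarrow> 3 \<Rightarrow> real^3 \<Rightarrow> real" where
  "gradU F \<Phi> k y = (\<Sum>l\<in>UNIV. Ginv F y $ k $ l * pd l \<Phi> y)"

definition covH :: "field3 \<Rightarrow> 3 \<Rightarrow> 3 \<Rightarrow> 3 \<Rightarrow> 3 \<Rightarrow> real^3 \<Rightarrow> real" where
  "covH F l k i j y = pd l (Hs F k i j) y
     - (\<Sum>a\<in>UNIV. Chr F a l k y * Hs F a i j y + Chr F a l i y * Hs F k a j y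
                  + Chr F a l j y * Hs F k i a y)"

definition Hup2 :: "field3 \<Rightarrow> 3 \<Rightarrow> 3 \<Rightarrow> 3 \<Rightarrow> real^3 \<Rightarrow> real" where
  "Hup2 F j m n y = (\<Sum>a\<in>UNIV. \<Sum>b\<in>UNIV. Ginv F y $ m $ a * Ginv F y $ n $ b * Hs F j a b y)"

definition beta_eqs :: "field3 \<Rightarrow> (real^3 \<Rightarrow> real) \<Rightarrow> real^3 \<Rightarrow> bool" where
  "beta_eqs F \<Phi> y \<longleftrightarrow>
    (\<forall>i j. Ric F i j y - Hess F \<Phi> i j y
            - (\<Sum>m\<in>UNIV. \<Sum>n\<in>UNIV. Hs F i m n y * Hup2 F j m n y) / 4 = 0) \<and>
    (\<forall>i j. (\<Sum>k\<in>UNIV. gradU F \<Phi> k y * Hs F k i j y)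
            + (\<Sum>k\<in>UNIV. \<Sum>l\<in>UNIV. Ginv F y $ k $ l * covH F l k i j y) = 0) \<and>
    (Scal F y - 2 * (\<Sum>i\<in>UNIV. \<Sum>j\<in>UNIV. Ginv F y $ i $ j * Hess F \<Phi> i j y)
       - (\<Sum>k\<in>UNIV. pd k \<Phi> y * gradU F \<Phi> k y)
       - (\<Sum>k\<in>UNIV. \<Sum>m\<in>UNIV. \<Sum>n\<in>UNIV. \<Sum>a\<in>UNIV.
            Hs F k m n y * Ginv F y $ k $ a * Hup2 F a m n y) / 12 = 0)"

definition Fex :: "real \<Rightarrow> real \<Rightarrow> real \<Rightarrow> real \<Rightarrow> real \<Rightarrow> real \<Rightarrow> real \<Rightarrow> real \<Rightarrow> field3" where
  "Fex u v w z q g h r = (\<lambda>y. vector [vector [0, u, v],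
                                       vector [w, q, g + w * y $ 2],
                                       vector [z, h + u * y $ 2, r + (v + z) * y $ 2]])"

end

theory Submission
  imports Defs
begin

(* F depends on y only through y2, and affinely.  Hence B = B0 + y2 B1 with B1 supported in the
   (2,3)-plane; in the cyclic sum defining H only d2 survives, and the B1 entries it produces
   cancel by antisymmetry.  With a = (u+w)/2 and b = (v+z)/2 the metric is
   G0 + y2 (t (x) e3 + e3 (x) t) with t = (0,a,b) (tvec); its determinant does not depend on y and
   its adjugate is quadratic in y2.  The Christoffel symbols are
   Gamma^l_ij = (delta^l_1 (Y_ij + a y2 t_i t_j) + n^l t_i t_j) / det, where Y = christoffel_const
   and n = (0,b,-a) (nvec) is orthogonal to t.  So the quadratic terms of the Riemann tensor
   reduce to delta^l_1 delta_j3 b t_i t_k / det, which together with the derivative term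
   delta^l_1 delta_j2 a t_i t_k / det gives delta^l_1 t_j t_i t_k / det, symmetric in j and k.
   With H = 0, R = 0 and Phi constant, every term of the beta-function equations vanishes. *)

lemma matrix_inv_eqI:
  fixes A B :: "'a::field^'n^'n"
  assumes "A ** B = mat 1"
  shows "matrix_inv A = B"
proof -
  have "B ** A = mat 1"
    using assms matrix_left_right_inverse by blast
  then have inv: "matrix_inv A ** A = mat 1"
    using assms unfolding matrix_inv_def by (metis (mono_tags, lifting) someI)
  have "matrix_inv A = matrix_inv A ** (A ** B)"
    using assms by simp
  also have "\<dots> = B"
    using inv by (simp add: matrix_mul_assoc)
  finally show ?thesis .
qed

lemma pd_const: "pd i (\<lambda>_. c) y = 0"
  by (simp add: pd_def)

lemma pd_fun_of_coordinate:
  assumes "\<And>x. f x = \<phi> (x $ k)" and "(\<phi> has_real_derivative d) (at (y $ k))"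
  shows "pd i f y = (if i = k then d else 0)"
proof (cases "i = k")
  case True
  have "((\<lambda>t. y $ k + t) has_real_derivative 1) (at 0)"
    by (auto intro!: derivative_eq_intros)
  from DERIV_chain2[OF _ this] assms(2)
  have "((\<lambda>t. \<phi> (y $ k + t)) has_real_derivative d) (at 0)"
    by simp
  then show ?thesis
    using True assms(1) by (simp add: pd_def DERIV_imp_deriv)
next
  case False
  then show ?thesis
    using assms(1) by (simp add: pd_def axis_def)
qed

lemma pd_affine_in_coordinate: "pd i (\<lambda>x. a + x $ k * b) y = (if i = k then b else 0)"
  by (rule pd_fun_of_coordinate[where \<phi> = "\<lambda>s. a + s * b"])
    (auto intro!: derivative_eq_intros)

lemma beta_eqs_const_if_flat_torsion_free:
  assumes torsion_free: "\<And>i j k x. Hs F i j k x = 0"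
    and flat: "\<And>l i j k. Riem F l i j k y = 0"
  shows "beta_eqs F (\<lambda>_. c) y"
proof -
  have "Hs F i j k = (\<lambda>_. 0)" for i j k
    using torsion_free by blast
  moreover have "pd i (\<lambda>_. c) = (\<lambda>_. 0)" for i
    by (simp add: pd_const fun_eq_iff)
  ultimately show ?thesis
    unfolding beta_eqs_def Hess_def gradU_def covH_def Hup2_def Scal_def Ric_def
    by (simp add: flat pd_const)
qed

lemma Bm_antisym: "Bm F x $ j $ i = - Bm F x $ i $ j"
  by (simp add: Bm_def field_simps)

lemma Hs_eq_0_if_Bm_affine:
  assumes Bm: "\<And>x. Bm F x = B0 + x $ 2 *\<^sub>R B1" and "B1 $ 1 $ 3 = 0"
  shows "Hs F i j k y = 0"
proof -
  have B1: "B1 = Bm F (axis 2 1) - Bm F 0"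
    using Bm[of 0] Bm[of "axis 2 1"] by simp
  have B1_antisym: "B1 $ j $ i = - B1 $ i $ j" for i j
    using Bm_antisym[of F "axis 2 1" j i] Bm_antisym[of F 0 j i] unfolding B1 by simp
  have B1_diag: "B1 $ i $ i = 0" for i
    using B1_antisym[of i i] by simp
  have "pd i (\<lambda>x. Bm F x $ j $ k) y = (if i = 2 then B1 $ j $ k else 0)" for i j k
    using pd_affine_in_coordinate[of i "B0 $ j $ k" 2 "B1 $ j $ k" y] by (simp add: Bm)
  then have Hs: "Hs F i j k y = (if i = 2 then B1 $ j $ k else 0)
      + (if j = 2 then B1 $ k $ i else 0) + (if k = 2 then B1 $ i $ j else 0)" for i j k
    by (simp add: Hs_def)
  have "\<forall>i j k. Hs F i j k y = 0"
    unfolding Hs forall_3 using B1_antisym[of 1 3] B1_antisym[of 2 1] B1_antisym[of 3 2]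
      \<open>B1 $ 1 $ 3 = 0\<close> by (simp add: B1_diag)
  then show ?thesis
    by blast
qed

definition christoffel_first :: "real^3^3 \<Rightarrow> 3 \<Rightarrow> 3 \<Rightarrow> 3 \<Rightarrow> real" where
  "christoffel_first G1 m i j =
    ((if i = 2 then G1 $ m $ j else 0) + (if j = 2 then G1 $ m $ i else 0)
     - (if m = 2 then G1 $ i $ j else 0)) / 2"

lemma Chr_if_Gm_affine:
  assumes "\<And>x. Gm F x = G0 + x $ 2 *\<^sub>R G1"
  shows "Chr F l i j x = (\<Sum>m\<in>UNIV. Ginv F x $ l $ m * christoffel_first G1 m i j)"
proof -
  have "pd k (\<lambda>x. Gm F x $ m $ j) x = (if k = 2 then G1 $ m $ j else 0)" for k m j
    using pd_affine_in_coordinate[of k "G0 $ m $ j" 2 "G1 $ m $ j" x] by (simp add: assms)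
  then show ?thesis
    by (simp add: Chr_def christoffel_first_def sum_divide_distrib algebra_simps)
qed

context
  fixes a b c q r :: real
begin

definition metric0 :: "real^3^3" where
  "metric0 = vector [vector [0, a, b], vector [a, q, c], vector [b, c, r]]"

definition metric_slope :: "real^3^3" where
  "metric_slope = vector [vector [0, 0, 0], vector [0, 0, a], vector [0, a, 2 * b]]"

definition metric_det :: real where
  "metric_det = 2 * a * b * c - q * b^2 - a^2 * r"

definition metric_adj0 :: "real^3^3" where
  "metric_adj0 = vector [vector [q * r - c^2, b * c - a * r, a * c - b * q],
                         vector [b * c - a * r, - (b^2), a * b],
                         vector [a * c - b * q, a * b, - (a^2)]]"

definition metric_adj1 :: "real^3^3" where
  "metric_adj1 = vector [vector [2 * q * b - 2 * a * c, - a * b, a^2],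
                         vector [- a * b, 0, 0], vector [a^2, 0, 0]]"

definition metric_adj2 :: "real^3^3" where
  "metric_adj2 = vector [vector [- (a^2), 0, 0], vector [0, 0, 0], vector [0, 0, 0]]"

definition metric_adj :: "real \<Rightarrow> real^3^3" where
  "metric_adj s = metric_adj0 + s *\<^sub>R metric_adj1 + s^2 *\<^sub>R metric_adj2"

lemma det_metric: "det (metric0 + s *\<^sub>R metric_slope) = metric_det"
  unfolding det_3 metric0_def metric_slope_def metric_det_def
  by (simp add: algebra_simps power2_eq_square)

lemma metric_mult_adj: "(metric0 + s *\<^sub>R metric_slope) ** metric_adj s = metric_det *\<^sub>R mat 1"
  unfolding metric0_def metric_slope_def metric_adj_def metric_adj0_def metric_adj1_def
    metric_adj2_def metric_det_def
  by (simp add: vec_eq_iff forall_3 matrix_matrix_mult_def sum_3 mat_def algebra_simps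
      power2_eq_square)

lemma matrix_inv_metric:
  assumes "metric_det \<noteq> 0"
  shows "matrix_inv (metric0 + s *\<^sub>R metric_slope) = (1 / metric_det) *\<^sub>R metric_adj s"
  using assms by (intro matrix_inv_eqI)
    (simp add: matrix_scalar_ac scalar_matrix_assoc[symmetric] metric_mult_adj)

definition christoffel_num :: "3 \<Rightarrow> 3 \<Rightarrow> 3 \<Rightarrow> real \<Rightarrow> real" where
  "christoffel_num l i j s = (\<Sum>m\<in>UNIV. metric_adj s $ l $ m * christoffel_first metric_slope m i j)"

definition tvec :: "real^3" where
  "tvec = vector [0, a, b]"

definition nvec :: "real^3" where
  "nvec = vector [0, b, - a]"

definition christoffel_const :: "real^3^3" where
  "christoffel_const =
    vector [vector [0, 0, 0], vector [0, a * (a * c - b * q), b * (a * c - b * q)],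
            vector [0, b * (a * c - b * q), b * (a * r - b * c)]]"

lemma christoffel_num_eq:
  "christoffel_num l i j s =
    (if l = 1 then christoffel_const $ i $ j + s * a * tvec $ i * tvec $ j else 0)
    + nvec $ l * tvec $ i * tvec $ j"
proof -
  have "\<forall>l i j. christoffel_num l i j s =
      (if l = 1 then christoffel_const $ i $ j + s * a * tvec $ i * tvec $ j else 0)
      + nvec $ l * tvec $ i * tvec $ j"
    unfolding christoffel_num_def christoffel_first_def sum_3 forall_3 metric_adj_def
      metric_adj0_def metric_adj1_def metric_adj2_def metric_slope_def tvec_def nvec_def
      christoffel_const_def
    by (simp add: algebra_simps power2_eq_square)
  then show ?thesis
    by blast
qed

lemma christoffel_num_contract:
  "(\<Sum>m\<in>UNIV. christoffel_num l j m s * christoffel_num m i k s) =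
    (if l = 1 \<and> j = 3 then b * metric_det * tvec $ i * tvec $ k else 0)"
proof -
  have "\<forall>j. christoffel_const $ j $ 1 = 0"
    unfolding christoffel_const_def forall_3 by simp
  then have "christoffel_num l j 1 s = 0"
    by (simp add: christoffel_num_eq tvec_def)
  then have "(\<Sum>m\<in>UNIV. christoffel_num l j m s * christoffel_num m i k s) =
      (\<Sum>m\<in>UNIV. christoffel_num l j m s * nvec $ m) * (tvec $ i * tvec $ k)"
    by (simp add: christoffel_num_eq[of _ i k] sum_3) (simp add: algebra_simps)
  \<comment> \<open>only christoffel_const survives the contraction with nvec, and it maps nvec to b det e3\<close>
  moreover have "\<forall>l j. (\<Sum>m\<in>UNIV. christoffel_num l j m s * nvec $ m) =
      (if l = 1 \<and> j = 3 then b * metric_det else 0)"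
    unfolding christoffel_num_eq sum_3 forall_3 tvec_def nvec_def christoffel_const_def
      metric_det_def
    by simp (simp add: algebra_simps power2_eq_square)
  ultimately show ?thesis
    by simp
qed

lemma Riem_eq_0_if_Gm_eq_metric:
  assumes Gm: "\<And>x. Gm F x = metric0 + x $ 2 *\<^sub>R metric_slope" and det: "metric_det \<noteq> 0"
  shows "Riem F l i j k y = 0"
proof -
  have Chr: "Chr F l i j x = christoffel_num l i j (x $ 2) / metric_det" for l i j x
    using det by (simp add: Chr_if_Gm_affine[OF Gm] Ginv_def Gm matrix_inv_metric
        christoffel_num_def sum_divide_distrib)
  have deriv: "((\<lambda>s. christoffel_num l i j s / metric_det) has_real_derivative
      (if l = 1 then a * tvec $ i * tvec $ j else 0) / metric_det) (at s)" for l i j s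
    unfolding christoffel_num_eq using det by (cases "l = 1") (auto intro!: derivative_eq_intros)
  have pd_Chr: "pd m (Chr F l i j) y =
      (if m = 2 then (if l = 1 then a * tvec $ i * tvec $ j else 0) / metric_det else 0)"
    for m l i j
    by (rule pd_fun_of_coordinate[OF _ deriv]) (simp add: Chr)
  have contract: "(\<Sum>m\<in>UNIV. Chr F l j m y * Chr F m i k y) =
      (if l = 1 \<and> j = 3 then b * tvec $ i * tvec $ k / metric_det else 0)" for j k
    using det by (simp add: Chr sum_divide_distrib[symmetric] christoffel_num_contract
        power2_eq_square)
  have tvec: "tvec $ j = (if j = 2 then a else 0) + (if j = 3 then b else 0)" for j
    using exhaust_3[of j] by (auto simp: tvec_def)
  show ?thesis
    unfolding Riem_def pd_Chr sum_subtractf contract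
    by (simp add: tvec[of j] tvec[of k] tvec[of 2] tvec[of 3] field_simps)
qed

end

lemma Gm_Fex:
  "Gm (Fex u v w z q g h r) x =
    metric0 ((u + w) / 2) ((v + z) / 2) ((g + h) / 2) q r
    + x $ 2 *\<^sub>R metric_slope ((u + w) / 2) ((v + z) / 2)"
  unfolding Gm_def Fex_def metric0_def metric_slope_def
  by (simp add: vec_eq_iff forall_3 field_simps)

lemma Bm_Fex:
  "Bm (Fex u v w z q g h r) x = Bm (Fex u v w z q g h r) 0
    + x $ 2 *\<^sub>R vector [vector [0, 0, 0], vector [0, 0, (w - u) / 2], vector [0, (u - w) / 2, 0]]"
  unfolding Bm_def Fex_def
  by (simp add: vec_eq_iff forall_3 field_simps)

theorem mainTheorem8:
  fixes u v w z q g h r :: real and U :: "(real^3) set"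
  assumes "open U"
    and "\<forall>y\<in>U. det (Gm (Fex u v w z q g h r) y) \<noteq> 0"
  shows "\<forall>y\<in>U.
      (\<forall>i j k. Hs (Fex u v w z q g h r) i j k y = 0) \<and>
      (\<forall>l i j k. Riem (Fex u v w z q g h r) l i j k y = 0) \<and>
      (\<forall>c::real. beta_eqs (Fex u v w z q g h r) (\<lambda>_. c) y)"
proof
  \<comment> \<open>det G is constant and H vanishes on all of R^3\<close>
  fix y
  assume "y \<in> U"
  let ?F = "Fex u v w z q g h r"
  have det: "metric_det ((u + w) / 2) ((v + z) / 2) ((g + h) / 2) q r \<noteq> 0"
    using assms(2) \<open>y \<in> U\<close> by (metis Gm_Fex det_metric)
  have flat: "Riem ?F l i j k y = 0" for l i j k
    using Gm_Fex det by (rule Riem_eq_0_if_Gm_eq_metric)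
  have torsion_free: "Hs ?F i j k x = 0" for i j k x
    using Bm_Fex by (rule Hs_eq_0_if_Bm_affine) simp
  show "(\<forall>i j k. Hs ?F i j k y = 0) \<and> (\<forall>l i j k. Riem ?F l i j k y = 0) \<and>
      (\<forall>c::real. beta_eqs ?F (\<lambda>_. c) y)"
    using torsion_free flat beta_eqs_const_if_flat_torsion_free by blast
qed

end
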